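(* Fix $r_{max}\ge 1$ and let $\tilde\gamma = 1-\sqrt{1-r_{max}^{-1}}$. The function $$\tilde w(\gamma) = \begin{cases} 1 & 0\le\gamma\le\tilde\gamma,\\ (\tilde\gamma/\gamma)^2 & \tilde\gamma<\gamma\le 1\end{cases}$$ belongs to $W(r_{max})$. Further, for every $w\in W(r_{max})$, $$\inf_\gamma h(\gamma,\tilde w) \ge \inf_\gamma h(\gamma, w).$$
   Context: Let $P$ be the uniform measure on $[0,1]$. For a probability measure $Q$ on $[0,1]$ with density $r = dQ/dP$ that is unimodal (non-decreasing on $[0,x^*]$ and non-increasing on $[x^*,1]$ for some maximiser $x^*$) with $\sup r = r_{max}$, its width function is $w(\gamma) = \inf\{\delta\in[0,1] : \exists z\in[0,1],\ S(\gamma)\subseteq[z,z+\delta]\}$ for $\gamma\in[0,1]$, where $S(\gamma) = \{x\in[0,1]: r(x)\ge\gamma r_{max}\}$. $W(r_{max})$ denotes the set of all width functions arising in this way from such $Q$ with the given value $r_{max}$. For a width function $w$, $h(\gamma,w) = \log\frac{1}{w(\gamma)} + 2\log\frac1\gamma$. *)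

theory Defs
  imports "HOL-Analysis.Analysis"
begin

text \<open>A density r = dQ/dP of a probability measure Q on [0,1] w.r.t. the uniform
  measure P: nonnegative on [0,1], integrating to 1 over [0,1].\<close>
definition admissible_density :: "(real \<Rightarrow> real) \<Rightarrow> real \<Rightarrow> bool" where
  "admissible_density r rmax \<longleftrightarrow>
     (\<forall>x\<in>{0..1}. 0 \<le> r x) \<and> (r has_integral 1) {0..1} \<and>
     (\<exists>xs\<in>{0..1}. mono_on {0..xs} r \<and> antimono_on {xs..1} r) \<and>
     rmax = (SUP x\<in>{0..1}. r x)"

definition superlevel :: "(real \<Rightarrow> real) \<Rightarrow> real \<Rightarrow> real \<Rightarrow> real set" where
  "superlevel r rmax \<gamma> = {x\<in>{0..1}. r x \<ge> \<gamma> * rmax}"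

definition width :: "(real \<Rightarrow> real) \<Rightarrow> real \<Rightarrow> real \<Rightarrow> real" where
  "width r rmax \<gamma> = Inf {\<delta>\<in>{0..1}. \<exists>z\<in>{0..1}. superlevel r rmax \<gamma> \<subseteq> {z..z+\<delta>}}"

definition Wset :: "real \<Rightarrow> (real \<Rightarrow> real) set" where
  "Wset rmax = {w. \<exists>r. admissible_density r rmax \<and> (\<forall>\<gamma>\<in>{0..1}. w \<gamma> = width r rmax \<gamma>)}"

definition hfun :: "real \<Rightarrow> (real \<Rightarrow> real) \<Rightarrow> ereal" where
  "hfun \<gamma> w = (if w \<gamma> > 0 \<and> \<gamma> > 0 then ereal (ln (1 / w \<gamma>) + 2 * ln (1 / \<gamma>)) else \<infinity>)"

definition gamma_tilde :: "real \<Rightarrow> real" where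
  "gamma_tilde rmax = 1 - sqrt (1 - 1 / rmax)"

definition w_tilde :: "real \<Rightarrow> real \<Rightarrow> real" where
  "w_tilde rmax \<gamma> = (if \<gamma> \<le> gamma_tilde rmax then 1 else (gamma_tilde rmax / \<gamma>)^2)"

end

theory Submission
  imports Defs
begin

text \<open>
  The density \<open>rmax \<cdot> min 1 (\<gamma>\<^sub>0 / sqrt x)\<close> with \<open>\<gamma>\<^sub>0 = gamma_tilde rmax\<close> is non-increasing,
  has mass \<open>rmax (2\<gamma>\<^sub>0 - \<gamma>\<^sub>0\<^sup>2) = 1\<close>, and its superlevel set at level \<open>\<gamma>\<close> is \<open>[0, w_tilde \<gamma>]\<close>;
  hence \<open>w_tilde \<in> W(rmax)\<close>, and \<open>h(\<gamma>, w_tilde) \<ge> -2 ln \<gamma>\<^sub>0\<close> with equality above \<open>\<gamma>\<^sub>0\<close>.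

  Conversely, \<open>h(\<gamma>, w) \<ge> -2 ln s\<close> for all \<open>\<gamma>\<close> means \<open>w(\<gamma>) \<le> s\<^sup>2/\<gamma>\<^sup>2\<close>. The set
  \<open>{r > \<gamma> rmax}\<close> lies in the superlevel set, so its measure is at most \<open>w(\<gamma>) \<le> min 1 (s\<^sup>2/\<gamma>\<^sup>2)\<close>,
  and the layer-cake formula gives \<open>1/rmax = \<integral>\<^sub>0\<^sup>1 |{r/rmax > \<gamma>}| d\<gamma> \<le> 2s - s\<^sup>2\<close>.
  As \<open>2\<gamma>\<^sub>0 - \<gamma>\<^sub>0\<^sup>2 = 1/rmax\<close> and \<open>2s - s\<^sup>2\<close> increases on \<open>[0,1]\<close>, this forces \<open>s \<ge> \<gamma>\<^sub>0\<close>.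
\<close>

lemma sigma_finite_measure_completion:
  assumes "sigma_finite_measure M"
  shows "sigma_finite_measure (completion M)"
proof -
  obtain A where A: "countable A" "A \<subseteq> sets M" "\<Union>A = space M" "\<forall>a\<in>A. emeasure M a \<noteq> \<infinity>"
    using sigma_finite_measure.sigma_finite_countable[OF assms] by blast
  show ?thesis
    by unfold_locales (use A in \<open>auto intro!: exI[of _ A]\<close>)
qed

lemma nn_integral_layer_cake:
  fixes g :: "'a \<Rightarrow> real"
  assumes "sigma_finite_measure M" and [measurable]: "g \<in> borel_measurable M"
  shows "(\<integral>\<^sup>+x. ennreal (g x) \<partial>M) =
    (\<integral>\<^sup>+t. emeasure M {x\<in>space M. t < g x} * indicator {0..} t \<partial>lborel)"
proof -
  interpret pair_sigma_finite M lborel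
    by (intro pair_sigma_finite.intro assms lborel.sigma_finite_measure_axioms)
  have "ennreal a = emeasure lborel {0..<a}" for a :: real
    by (cases "0 \<le> a") (simp_all add: ennreal_neg)
  then have "(\<integral>\<^sup>+x. ennreal (g x) \<partial>M) = (\<integral>\<^sup>+x. \<integral>\<^sup>+t. indicator {0..<g x} t \<partial>lborel \<partial>M)"
    by simp
  also have "\<dots> = (\<integral>\<^sup>+t. \<integral>\<^sup>+x. indicator {0..<g x} t \<partial>M \<partial>lborel)"
    by (rule Fubini'[where f="\<lambda>x t. indicator {0..<g x} t", symmetric])
      (measurable, simp only: atLeastLessThan_iff, measurable)
  also have "\<dots> = (\<integral>\<^sup>+t. emeasure M {x\<in>space M. t < g x} * indicator {0..} t \<partial>lborel)"
  proof (intro nn_integral_cong)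
    fix t :: real
    have "(\<integral>\<^sup>+x. indicator {0..<g x} t \<partial>M) = (\<integral>\<^sup>+x. indicator {x\<in>space M. t < g x} x * indicator {0..} t \<partial>M)"
      by (intro nn_integral_cong) (auto simp: indicator_def)
    also have "\<dots> = emeasure M {x\<in>space M. t < g x} * indicator {0..} t"
      by (simp add: nn_integral_multc)
    finally show "(\<integral>\<^sup>+x. indicator {0..<g x} t \<partial>M) = emeasure M {x\<in>space M. t < g x} * indicator {0..} t" .
  qed
  finally show ?thesis .
qed

lemma emeasure_lebesgue_le_diameter:
  fixes S :: "real set"
  assumes diam: "\<And>x y. x \<in> S \<Longrightarrow> y \<in> S \<Longrightarrow> y - x \<le> d"
  shows "emeasure lebesgue S \<le> ennreal d"
proof (cases "S = {}")
  case False
  have bdd: "bdd_below S"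
    using False diam by (metis bdd_below.I diff_le_eq ex_in_conv add.commute)
  have "S \<subseteq> {Inf S..Inf S + d}"
  proof
    fix y assume y: "y \<in> S"
    have "Inf S \<le> y" using y bdd by (rule cInf_lower)
    moreover have "y - d \<le> Inf S"
      using False by (rule cInf_greatest) (use diam[OF _ y] in force)
    ultimately show "y \<in> {Inf S..Inf S + d}" by simp
  qed
  then have "emeasure lebesgue S \<le> emeasure lebesgue {Inf S..Inf S + d}"
    by (rule emeasure_mono) simp
  also have "\<dots> = ennreal d"
    using False diam by fastforce
  finally show ?thesis .
qed simp

lemma admissible_density_le_rmax:
  assumes "admissible_density r rmax" "x \<in> {0..1}"
  shows "r x \<le> rmax"
proof -
  obtain xs where xs: "xs \<in> {0..1}" "mono_on {0..xs} r" "antimono_on {xs..1} r"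
    and rmax: "rmax = (SUP x\<in>{0..1}. r x)"
    using assms(1) unfolding admissible_density_def by blast
  have le_mode: "r y \<le> r xs" if "y \<in> {0..1}" for y
  proof (cases "y \<le> xs")
    case True
    then show ?thesis using that xs by (auto intro: mono_onD[OF xs(2)])
  next
    case False
    then show ?thesis using that xs monotone_onD[OF xs(3), of xs y] by auto
  qed
  show ?thesis
    unfolding rmax using assms(2) le_mode by (intro cSUP_upper bdd_aboveI2) auto
qed

lemma dist_le_width:
  assumes "x \<in> superlevel r rmax \<gamma>" "y \<in> superlevel r rmax \<gamma>"
  shows "\<bar>x - y\<bar> \<le> width r rmax \<gamma>"
  unfolding width_def
proof (rule cInf_greatest)
  have "superlevel r rmax \<gamma> \<subseteq> {0..0 + 1}" by (auto simp: superlevel_def)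
  then show "{\<delta> \<in> {0..1}. \<exists>z\<in>{0..1}. superlevel r rmax \<gamma> \<subseteq> {z..z + \<delta>}} \<noteq> {}" by force
next
  fix \<delta> assume "\<delta> \<in> {\<delta> \<in> {0..1}. \<exists>z\<in>{0..1}. superlevel r rmax \<gamma> \<subseteq> {z..z + \<delta>}}"
  then obtain z where "superlevel r rmax \<gamma> \<subseteq> {z..z + \<delta>}" by auto
  with assms have "x \<in> {z..z + \<delta>}" "y \<in> {z..z + \<delta>}" by blast+
  then show "\<bar>x - y\<bar> \<le> \<delta>" by (simp add: abs_le_iff)
qed

lemma width_le_one: "width r rmax \<gamma> \<le> 1"
  unfolding width_def
  by (rule cInf_lower) (auto simp: superlevel_def intro!: bexI[of _ 0] bdd_belowI[of _ 0])

lemma emeasure_le_width: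
  assumes "T \<subseteq> superlevel r rmax \<gamma>"
  shows "emeasure lebesgue T \<le> ennreal (width r rmax \<gamma>)"
  by (rule emeasure_lebesgue_le_diameter) (use assms dist_le_width in force)

lemma inverse_rmax_le_nn_integral_width:
  assumes "admissible_density r rmax" "0 < rmax"
  shows "ennreal (1 / rmax) \<le> (\<integral>\<^sup>+\<gamma>. ennreal (width r rmax \<gamma>) * indicator {0..1} \<gamma> \<partial>lborel)"
proof -
  have nonneg: "\<And>x. x \<in> {0..1} \<Longrightarrow> 0 \<le> r x / rmax" and int: "((\<lambda>x. r x / rmax) has_integral 1 / rmax) {0..1}"
    using assms has_integral_divide[of r 1 "{0..1}" rmax] by (auto simp: admissible_density_def)
  define g where "g x = r x / rmax * indicator {0..1} x" for x
  have g_le_one: "g x \<le> 1" for x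
    using admissible_density_le_rmax[OF assms(1)] assms(2) by (auto simp: g_def indicator_def)
  have "ennreal (1 / rmax) = (\<integral>\<^sup>+x. ennreal (r x / rmax) * indicator {0..1} x \<partial>lborel)"
    using nn_integral_has_integral_lebesgue'[OF nonneg int] by simp
  also have "\<dots> = (\<integral>\<^sup>+x. ennreal (g x) \<partial>lebesgue)"
    unfolding nn_integral_completion by (intro nn_integral_cong) (simp add: g_def indicator_def)
  also have "\<dots> = (\<integral>\<^sup>+t. emeasure lebesgue {x. t < g x} * indicator {0..} t \<partial>lborel)"
    using nn_integral_layer_cake[OF sigma_finite_measure_completion[OF lborel.sigma_finite_measure_axioms]]
      has_integral_implies_lebesgue_measurable_real[OF int]
    by (simp add: g_def)
  also have "\<dots> \<le> (\<integral>\<^sup>+t. ennreal (width r rmax t) * indicator {0..1} t \<partial>lborel)"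
  proof (intro nn_integral_mono)
    fix t :: real
    show "emeasure lebesgue {x. t < g x} * indicator {0..} t \<le> ennreal (width r rmax t) * indicator {0..1} t"
    proof (cases "0 \<le> t \<and> t \<le> 1")
      case True
      have "{x. t < g x} \<subseteq> superlevel r rmax t"
      proof
        fix x assume "x \<in> {x. t < g x}"
        then have "t < g x" by simp
        moreover have x01: "x \<in> {0..1}"
          using True \<open>t < g x\<close> by (auto simp: g_def split: split_indicator_asm)
        ultimately have "t < r x / rmax" by (simp add: g_def)
        then show "x \<in> superlevel r rmax t"
          using x01 assms(2) by (simp add: superlevel_def field_simps)
      qed
      then show ?thesis using True emeasure_le_width by simp
    next
      case False
      moreover have "\<not> t < g x" if "1 < t" for x
        using g_le_one[of x] that by linarith
      ultimately have "{x. t < g x} = {} \<or> t < 0" by auto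
      then show ?thesis by auto
    qed
  qed
  finally show ?thesis .
qed

lemma gamma_tilde_pos: "1 \<le> rmax \<Longrightarrow> 0 < gamma_tilde rmax"
  by (simp add: gamma_tilde_def)

lemma gamma_tilde_le_one: "1 \<le> rmax \<Longrightarrow> gamma_tilde rmax \<le> 1"
  by (simp add: gamma_tilde_def)

lemma gamma_tilde_equation:
  assumes "1 \<le> rmax"
  shows "2 * gamma_tilde rmax - (gamma_tilde rmax)^2 = 1 / rmax"
proof -
  have "(1 - gamma_tilde rmax)^2 = 1 - 1 / rmax"
    using assms by (simp add: gamma_tilde_def)
  then show ?thesis by (simp add: power2_eq_square algebra_simps)
qed

lemma has_integral_truncated_inverse_square:
  fixes s :: real
  assumes s: "0 < s" "s \<le> 1"
  shows "((\<lambda>\<gamma>. if \<gamma> \<le> s then 1 else s^2 / \<gamma>^2) has_integral 2 * s - s^2) {0..1}"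
proof -
  have "((\<lambda>\<gamma>. 1) has_integral s) {0..s}"
    using has_integral_const_real[of "1::real" 0 s] s by simp
  then have head: "((\<lambda>\<gamma>. if \<gamma> \<le> s then 1 else s^2 / \<gamma>^2) has_integral s) {0..s}"
    by (rule has_integral_eq[rotated]) simp
  have "((\<lambda>\<gamma>. s^2 / \<gamma>^2) has_integral (- (s^2) / 1) - (- (s^2) / s)) {s..1}"
  proof (rule fundamental_theorem_of_calculus)
    fix \<gamma> assume "\<gamma> \<in> {s..1}"
    then have "\<gamma> \<noteq> 0" using s by auto
    then show "((\<lambda>\<gamma>. - (s^2) / \<gamma>) has_vector_derivative s^2 / \<gamma>^2) (at \<gamma> within {s..1})"
      by (auto intro!: derivative_eq_intros
          simp: has_real_derivative_iff_has_vector_derivative[symmetric] power2_eq_square)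
  qed (use s in simp)
  moreover have "(- (s^2) / 1) - (- (s^2) / s) = s - s^2"
    using s by (simp add: power2_eq_square)
  ultimately have "((\<lambda>\<gamma>. s^2 / \<gamma>^2) has_integral s - s^2) {s..1}" by simp
  then have tail: "((\<lambda>\<gamma>. if \<gamma> \<le> s then 1 else s^2 / \<gamma>^2) has_integral s - s^2) {s..1}"
    by (rule has_integral_eq[rotated]) (use s in auto)
  show ?thesis
    using has_integral_combine[OF _ s(2) head tail] s by simp
qed

lemma gamma_tilde_le_of_width_le:
  assumes rmax: "1 \<le> rmax" and adm: "admissible_density r rmax" and s: "0 < s"
    and width_le: "\<And>\<gamma>. 0 < \<gamma> \<Longrightarrow> \<gamma> \<le> 1 \<Longrightarrow> width r rmax \<gamma> \<le> s^2 / \<gamma>^2"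
  shows "gamma_tilde rmax \<le> s"
proof (cases "s < 1")
  case True
  define B where "B \<gamma> = (if \<gamma> \<le> s then 1 else s^2 / \<gamma>^2)" for \<gamma> :: real
  have "ennreal (1 / rmax) \<le> (\<integral>\<^sup>+\<gamma>. ennreal (width r rmax \<gamma>) * indicator {0..1} \<gamma> \<partial>lborel)"
    using rmax by (intro inverse_rmax_le_nn_integral_width adm) simp
  also have "\<dots> \<le> (\<integral>\<^sup>+\<gamma>. ennreal (B \<gamma>) * indicator {0..1} \<gamma> \<partial>lborel)"
    using width_le_one s by (intro nn_integral_mono) (auto simp: B_def width_le split: split_indicator)
  also have "\<dots> = ennreal (2 * s - s^2)"
    using has_integral_truncated_inverse_square[of s] True s
    by (intro nn_integral_has_integral_lebesgue') (auto simp: B_def)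
  finally have "1 / rmax \<le> 2 * s - s^2"
    using True s by (subst (asm) ennreal_le_iff) (auto simp: power2_eq_square)
  then have "(1 - s)^2 \<le> (1 - gamma_tilde rmax)^2"
    using gamma_tilde_equation[OF rmax] by (simp add: power2_eq_square algebra_simps)
  then have "1 - s \<le> 1 - gamma_tilde rmax"
    by (rule power2_le_imp_le) (use gamma_tilde_le_one[OF rmax] in simp)
  then show ?thesis by simp
next
  case False
  then show ?thesis using gamma_tilde_le_one[OF rmax] by simp
qed

definition extremal_density :: "real \<Rightarrow> real \<Rightarrow> real" where
  "extremal_density rmax x =
     (if x \<le> (gamma_tilde rmax)^2 then rmax else rmax * gamma_tilde rmax / sqrt x)"

lemma extremal_density_antimono:
  assumes "1 \<le> rmax" "0 \<le> x" "x \<le> y"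
  shows "extremal_density rmax y \<le> extremal_density rmax x"
proof -
  define G where "G = gamma_tilde rmax"
  have G: "0 < G" "G \<le> 1" using assms(1) by (simp_all add: G_def gamma_tilde_pos gamma_tilde_le_one)
  have "rmax * G / sqrt y \<le> rmax * G / sqrt x" if "G^2 < x"
  proof -
    have "0 < x" using that zero_le_power2[of G] by linarith
    then have "0 < sqrt x" by simp
    moreover have "sqrt x \<le> sqrt y" using assms by simp
    ultimately show ?thesis using assms G by (intro divide_left_mono mult_pos_pos) auto
  qed
  moreover have "rmax * G / sqrt y \<le> rmax" if "G^2 < y"
  proof -
    have "G < sqrt y" using that G real_less_rsqrt by blast
    with assms G show ?thesis by (simp add: divide_le_eq)
  qed
  ultimately show ?thesis
    using assms by (auto simp: extremal_density_def G_def[symmetric])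
qed

lemma extremal_density_has_integral:
  assumes rmax: "1 \<le> rmax"
  shows "(extremal_density rmax has_integral 1) {0..1}"
proof -
  define G where "G = gamma_tilde rmax"
  have G: "0 < G" "G \<le> 1" using rmax by (simp_all add: G_def gamma_tilde_pos gamma_tilde_le_one)
  then have G2: "0 < G^2" "G^2 \<le> 1" by (simp_all add: power_le_one)
  have "((\<lambda>x. rmax) has_integral rmax * G^2) {0..G^2}"
    using has_integral_const_real[of rmax 0 "G^2"] G2 by (simp add: mult.commute)
  then have head: "(extremal_density rmax has_integral rmax * G^2) {0..G^2}"
    by (rule has_integral_eq[rotated]) (simp add: extremal_density_def G_def)
  have "((\<lambda>x. rmax * G / sqrt x) has_integral 2 * rmax * G * sqrt 1 - 2 * rmax * G * sqrt (G^2)) {G^2..1}"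
  proof (rule fundamental_theorem_of_calculus)
    fix x assume "x \<in> {G^2..1}"
    then have "0 < x" using G2 by (simp only: atLeastAtMost_iff) linarith
    then show "((\<lambda>x. 2 * rmax * G * sqrt x) has_vector_derivative rmax * G / sqrt x) (at x within {G^2..1})"
      by (auto intro!: derivative_eq_intros
          simp: has_real_derivative_iff_has_vector_derivative[symmetric] field_simps)
  qed (use G2 in simp)
  then have "((\<lambda>x. rmax * G / sqrt x) has_integral rmax * (2 * G - 2 * G^2)) {G^2..1}"
    using G by (simp add: power2_eq_square algebra_simps)
  then have tail: "(extremal_density rmax has_integral rmax * (2 * G - 2 * G^2)) {G^2..1}"
    by (rule has_integral_eq[rotated]) (use G in \<open>auto simp: extremal_density_def G_def[symmetric]\<close>)
  have "rmax * G^2 + rmax * (2 * G - 2 * G^2) = rmax * (2 * G - G^2)"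
    by (simp add: algebra_simps)
  also have "\<dots> = 1"
    using gamma_tilde_equation[OF rmax] rmax by (simp add: G_def)
  finally show ?thesis
    using has_integral_combine[OF _ G2(2) head tail] G2 by simp
qed

lemma admissible_extremal_density:
  assumes rmax: "1 \<le> rmax"
  shows "admissible_density (extremal_density rmax) rmax"
  unfolding admissible_density_def
proof (intro conjI)
  have le_at_0: "extremal_density rmax x \<le> extremal_density rmax 0" if "x \<in> {0..1}" for x
    using that rmax by (intro extremal_density_antimono) auto
  have at_0: "extremal_density rmax 0 = rmax"
    by (simp add: extremal_density_def)
  show "\<forall>x\<in>{0..1}. 0 \<le> extremal_density rmax x"
    using rmax gamma_tilde_pos[OF rmax] by (auto simp: extremal_density_def)
  show "(extremal_density rmax has_integral 1) {0..1}"
    using rmax by (rule extremal_density_has_integral)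
  show "\<exists>xs\<in>{0..1}. mono_on {0..xs} (extremal_density rmax) \<and> antimono_on {xs..1} (extremal_density rmax)"
    using rmax by (intro bexI[of _ 0]) (auto intro!: monotone_onI extremal_density_antimono)
  show "rmax = (SUP x\<in>{0..1}. extremal_density rmax x)"
  proof (rule antisym)
    have "extremal_density rmax 0 \<le> (SUP x\<in>{0..1}. extremal_density rmax x)"
      using le_at_0 by (intro cSUP_upper bdd_aboveI2) auto
    then show "rmax \<le> (SUP x\<in>{0..1}. extremal_density rmax x)"
      by (simp only: at_0)
    show "(SUP x\<in>{0..1}. extremal_density rmax x) \<le> rmax"
      using le_at_0 by (intro cSUP_least) (auto simp: at_0)
  qed
qed

lemma superlevel_extremal_density:
  assumes rmax: "1 \<le> rmax" and \<gamma>: "\<gamma> \<in> {0..1}"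
  shows "superlevel (extremal_density rmax) rmax \<gamma> = {0..w_tilde rmax \<gamma>}"
proof -
  define G where "G = gamma_tilde rmax"
  have G: "0 < G" "G \<le> 1" using rmax by (simp_all add: G_def gamma_tilde_pos gamma_tilde_le_one)
  show ?thesis
  proof (cases "\<gamma> \<le> G")
    case True
    have "\<gamma> * rmax \<le> extremal_density rmax x" if "x \<in> {0..1}" for x
    proof -
      have "\<gamma> * rmax \<le> G * rmax" using True rmax by simp
      also have "\<dots> \<le> extremal_density rmax 1"
        using G rmax by (simp add: extremal_density_def G_def[symmetric])
      also have "\<dots> \<le> extremal_density rmax x"
        using that rmax by (intro extremal_density_antimono) auto
      finally show ?thesis .
    qed
    then show ?thesis
      using True by (auto simp: superlevel_def w_tilde_def G_def[symmetric])
  next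
    case False
    define a where "a = (G / \<gamma>)^2"
    have "0 < \<gamma>" using False G by simp
    have "G \<le> G / \<gamma>" "G / \<gamma> \<le> 1"
      using False G \<gamma> \<open>0 < \<gamma>\<close> by (auto simp: le_divide_eq mult_le_cancel_left1)
    then have a: "G^2 \<le> a" "a \<le> 1" "sqrt a = G / \<gamma>"
      using G \<open>0 < \<gamma>\<close> unfolding a_def by (auto intro!: power_mono power_le_one)
    have "\<gamma> * rmax \<le> extremal_density rmax x \<longleftrightarrow> x \<le> a" if "0 \<le> x" for x
    proof (cases "x \<le> G^2")
      case True
      then show ?thesis using \<gamma> a rmax by (auto simp: extremal_density_def G_def[symmetric])
    next
      case False
      then have "0 < x" using zero_le_power2[of G] by linarith
      then have "0 < sqrt x" by simp
      then have "\<gamma> * rmax \<le> rmax * G / sqrt x \<longleftrightarrow> sqrt x \<le> G / \<gamma>"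
        using rmax \<open>0 < \<gamma>\<close> by (simp add: field_simps)
      also have "\<dots> \<longleftrightarrow> x \<le> a"
        by (simp flip: a(3))
      finally show ?thesis
        using False by (simp add: extremal_density_def G_def[symmetric])
    qed
    then show ?thesis
      using False a by (auto simp: superlevel_def w_tilde_def G_def[symmetric] a_def)
  qed
qed

lemma width_eq_of_superlevel_eq:
  assumes "superlevel r rmax \<gamma> = {0..a}" "0 \<le> a" "a \<le> 1"
  shows "width r rmax \<gamma> = a"
proof (rule antisym)
  show "width r rmax \<gamma> \<le> a"
    unfolding width_def using assms
    by (intro cInf_lower) (auto intro!: bexI[of _ 0] bdd_belowI[of _ 0])
  show "a \<le> width r rmax \<gamma>"
    using dist_le_width[of 0 r rmax \<gamma> a] assms by simp
qed

lemma w_tilde_in_Wset: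
  assumes rmax: "1 \<le> rmax"
  shows "w_tilde rmax \<in> Wset rmax"
proof -
  have "w_tilde rmax \<gamma> = width (extremal_density rmax) rmax \<gamma>" if "\<gamma> \<in> {0..1}" for \<gamma>
  proof -
    have "0 < gamma_tilde rmax / \<gamma>" "gamma_tilde rmax / \<gamma> \<le> 1" if "gamma_tilde rmax < \<gamma>"
      using that gamma_tilde_pos[OF rmax] \<open>\<gamma> \<in> {0..1}\<close> by auto
    then have "0 \<le> w_tilde rmax \<gamma>" "w_tilde rmax \<gamma> \<le> 1"
      by (auto simp: w_tilde_def power_le_one)
    then show ?thesis
      using superlevel_extremal_density[OF rmax that] by (simp add: width_eq_of_superlevel_eq)
  qed
  then show ?thesis
    unfolding Wset_def using admissible_extremal_density[OF rmax] by blast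
qed

lemma hfun_ge_iff:
  assumes "0 < \<gamma>" "0 < s"
  shows "ereal (- 2 * ln s) \<le> hfun \<gamma> w \<longleftrightarrow> w \<gamma> \<le> s^2 / \<gamma>^2"
proof (cases "0 < w \<gamma>")
  case True
  have "ln (1 / w \<gamma>) + 2 * ln (1 / \<gamma>) = - ln (w \<gamma> * \<gamma>^2)" "2 * ln s = ln (s^2)"
    using True assms by (simp_all add: ln_div ln_mult ln_realpow)
  then have "ereal (- 2 * ln s) \<le> hfun \<gamma> w \<longleftrightarrow> w \<gamma> * \<gamma>^2 \<le> s^2"
    using True assms by (simp add: hfun_def)
  also have "\<dots> \<longleftrightarrow> w \<gamma> \<le> s^2 / \<gamma>^2"
    using assms by (simp add: le_divide_eq)
  finally show ?thesis .
next
  case False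
  then show ?thesis
    using assms by (simp add: hfun_def order.trans[OF _ zero_le_divide_iff[THEN iffD2]])
qed

lemma INF_hfun_ge_iff:
  assumes "0 < s"
  shows "ereal (- 2 * ln s) \<le> (INF \<gamma>\<in>{0..1}. hfun \<gamma> w) \<longleftrightarrow> (\<forall>\<gamma>\<in>{0<..1}. w \<gamma> \<le> s^2 / \<gamma>^2)"
proof -
  have "{0..1} = insert 0 {0<..1::real}" by auto
  moreover have "hfun 0 w = \<infinity>" by (simp add: hfun_def)
  ultimately have "ereal (- 2 * ln s) \<le> (INF \<gamma>\<in>{0..1}. hfun \<gamma> w) \<longleftrightarrow>
      (\<forall>\<gamma>\<in>{0<..1}. ereal (- 2 * ln s) \<le> hfun \<gamma> w)"
    by (simp add: le_INF_iff)
  also have "\<dots> \<longleftrightarrow> (\<forall>\<gamma>\<in>{0<..1}. w \<gamma> \<le> s^2 / \<gamma>^2)"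
    using assms hfun_ge_iff by auto
  finally show ?thesis .
qed

lemma w_tilde_le:
  assumes "1 \<le> rmax" "0 < \<gamma>"
  shows "w_tilde rmax \<gamma> \<le> (gamma_tilde rmax)^2 / \<gamma>^2"
proof (cases "\<gamma> \<le> gamma_tilde rmax")
  case True
  then have "\<gamma>^2 \<le> (gamma_tilde rmax)^2"
    using assms by (intro power_mono) auto
  then show ?thesis
    using True assms by (simp add: w_tilde_def)
qed (simp add: w_tilde_def power_divide)

lemma INF_hfun_w_tilde_ge:
  assumes "1 \<le> rmax"
  shows "ereal (- 2 * ln (gamma_tilde rmax)) \<le> (INF \<gamma>\<in>{0..1}. hfun \<gamma> (w_tilde rmax))"
  using assms by (subst INF_hfun_ge_iff) (auto simp: gamma_tilde_pos w_tilde_le)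

lemma INF_hfun_width_le:
  assumes rmax: "1 \<le> rmax" and adm: "admissible_density r rmax"
    and w: "\<And>\<gamma>. \<gamma> \<in> {0..1} \<Longrightarrow> w \<gamma> = width r rmax \<gamma>"
  shows "(INF \<gamma>\<in>{0..1}. hfun \<gamma> w) \<le> ereal (- 2 * ln (gamma_tilde rmax))"
proof (rule dense_le)
  fix y assume "y < (INF \<gamma>\<in>{0..1}. hfun \<gamma> w)"
  then obtain t where t: "y < ereal t" "ereal t < (INF \<gamma>\<in>{0..1}. hfun \<gamma> w)"
    using ereal_dense2 by blast
  define s where "s = exp (- t / 2)"
  have "0 < s" "t = - 2 * ln s" by (simp_all add: s_def)
  then have "\<forall>\<gamma>\<in>{0<..1}. w \<gamma> \<le> s^2 / \<gamma>^2"
    using t(2) by (simp flip: INF_hfun_ge_iff)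
  then have "gamma_tilde rmax \<le> s"
    using w by (intro gamma_tilde_le_of_width_le[OF rmax adm \<open>0 < s\<close>]) auto
  then have "t \<le> - 2 * ln (gamma_tilde rmax)"
    using \<open>t = - 2 * ln s\<close> gamma_tilde_pos[OF rmax] by simp
  with t(1) show "y \<le> ereal (- 2 * ln (gamma_tilde rmax))"
    by (simp add: order.strict_implies_order order.strict_trans2)
qed

theorem mainTheorem10:
  fixes rmax :: real
  assumes "rmax \<ge> 1"
  shows "w_tilde rmax \<in> Wset rmax \<and>
    (\<forall>w\<in>Wset rmax. (INF \<gamma>\<in>{0..1}. hfun \<gamma> (w_tilde rmax)) \<ge> (INF \<gamma>\<in>{0..1}. hfun \<gamma> w))"
proof (intro conjI ballI)
  show "w_tilde rmax \<in> Wset rmax"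
    using assms by (rule w_tilde_in_Wset)
next
  fix w assume "w \<in> Wset rmax"
  then obtain r where "admissible_density r rmax" "\<And>\<gamma>. \<gamma> \<in> {0..1} \<Longrightarrow> w \<gamma> = width r rmax \<gamma>"
    unfolding Wset_def by blast
  then have "(INF \<gamma>\<in>{0..1}. hfun \<gamma> w) \<le> ereal (- 2 * ln (gamma_tilde rmax))"
    using assms by (intro INF_hfun_width_le) auto
  also have "\<dots> \<le> (INF \<gamma>\<in>{0..1}. hfun \<gamma> (w_tilde rmax))"
    using assms by (rule INF_hfun_w_tilde_ge)
  finally show "(INF \<gamma>\<in>{0..1}. hfun \<gamma> w) \<le> (INF \<gamma>\<in>{0..1}. hfun \<gamma> (w_tilde rmax))" .
qed

end
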